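(* Let $S$ be a (Hausdorff) topological semigroup such that $S\times S$ is countably compact. Then $S$ does not contain a subsemigroup isomorphic to the semigroup $B_\omega$ of $\omega\times\omega$-matrix units.
   Context: A topological semigroup is a Hausdorff space with a continuous associative multiplication. For a nonzero cardinal $\lambda$, the semigroup of $\lambda\times\lambda$-matrix units is $B_\lambda=(\lambda\times\lambda)\cup\{0\}$ with $(a,b)\cdot(c,d)=(a,d)$ if $b=c$, $(a,b)\cdot(c,d)=0$ if $b\neq c$, and $0$ a zero element. $\omega$ is the first infinite cardinal. *)

theory Defs
  imports "HOL-Analysis.Analysis"
begin

text \<open>The semigroup B_omega of omega x omega matrix units: elements are
  Some (a,b) for the matrix unit (a,b) with a b natural numbers, and None for zero.\<close>

type_synonym B_omega = "(nat \<times> nat) option"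

fun B_mult :: "B_omega \<Rightarrow> B_omega \<Rightarrow> B_omega" where
  "B_mult (Some (a, b)) (Some (c, d)) = (if b = c then Some (a, d) else None)"
| "B_mult _ _ = None"

text \<open>S contains a subsemigroup isomorphic to B_omega iff there is an injective
  semigroup homomorphism from B_omega into S (its image is the subsemigroup).\<close>

definition contains_B_omega :: "('a::semigroup_mult) set \<Rightarrow> bool" where
  "contains_B_omega S \<longleftrightarrow>
     (\<exists>h :: B_omega \<Rightarrow> 'a. inj h \<and> range h \<subseteq> S \<and>
        (\<forall>x y. h (B_mult x y) = h x * h y))"

end

theory Submission
  imports Defs
begin

text \<open>
  Suppose \<open>h\<close> embeds \<open>B_\<omega>\<close> into \<open>S\<close> and put \<open>a m = h (0,m)\<close>,
  \<open>b n = h (n,0)\<close>, \<open>e = h (0,0)\<close>, \<open>z = h 0\<close>.  Then \<open>a m * b n\<close> equals \<open>e\<close>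
  when \<open>m = n\<close> and \<open>z\<close> otherwise, with \<open>e \<noteq> z\<close>.  We show in general that no
  continuous map \<open>f : X \<times> Y \<rightarrow> Z\<close> into a T1 space with \<open>X \<times> Y\<close> countably compact
  can exhibit such a "diagonal pattern": the points \<open>(a n, b n)\<close> are pairwise
  distinct, so they cluster at some \<open>q\<close>; a neighbourhood \<open>W\<close> of \<open>f q\<close> misses
  \<open>e\<close> or \<open>z\<close>, but a box \<open>A \<times> B\<close> around \<open>q\<close> inside \<open>f\<^sup>-\<^sup>1 W\<close> contains
  \<open>(a m, b m)\<close> and \<open>(a n, b n)\<close> for some \<open>m \<noteq> n\<close>, whence both
  \<open>e = f (a m, b m)\<close> and \<open>z = f (a m, b n)\<close> lie in \<open>W\<close>.
\<close>

lemma countably_compact_inj_seq_cluster: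
  fixes s :: "nat \<Rightarrow> 'a::topological_space"
  assumes "countably_compact (UNIV :: 'a set)" and "inj s"
  obtains q where "\<And>U. open U \<Longrightarrow> q \<in> U \<Longrightarrow> infinite {n. s n \<in> U}"
proof -
  have "infinite (range s)"
    using \<open>inj s\<close> by (simp add: range_inj_infinite)
  then obtain q where q: "\<forall>U. q \<in> U \<and> open U \<longrightarrow> infinite (U \<inter> range s)"
    using countably_compact_imp_acc_point[OF assms(1), of "range s"] by auto
  have "infinite {n. s n \<in> U}" if "open U" "q \<in> U" for U
  proof
    assume "finite {n. s n \<in> U}"
    moreover have "U \<inter> range s = s ` {n. s n \<in> U}" by blast
    ultimately show False using q that by auto
  qed
  then show thesis by (rule that)
qed

lemma infinite_obtain_two:
  assumes "infinite (N :: 'a set)"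
  obtains m n where "m \<in> N" "n \<in> N" "m \<noteq> n"
proof -
  obtain m where "m \<in> N"
    using assms by (metis ex_in_conv finite.emptyI)
  moreover obtain n where "n \<in> N - {m}"
    using assms by (metis ex_in_conv finite.emptyI infinite_remove)
  ultimately show thesis using that by blast
qed

lemma no_diagonal_pattern:
  fixes f :: "'a::topological_space \<times> 'b::topological_space \<Rightarrow> 'c::t1_space"
    and a :: "nat \<Rightarrow> 'a" and b :: "nat \<Rightarrow> 'b"
  assumes cont: "continuous_on UNIV f"
    and cc: "countably_compact (UNIV :: ('a \<times> 'b) set)"
    and "e \<noteq> z"
    and pattern: "\<And>m n. f (a m, b n) = (if m = n then e else z)"
  shows False
proof -
  define s where "s n = (a n, b n)" for n
  have "inj s"
  proof (rule injI)
    fix m n assume "s m = s n"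
    then have "f (a m, b n) = e" using pattern[of n n] by (simp add: s_def)
    then show "m = n" using pattern[of m n] \<open>e \<noteq> z\<close> by presburger
  qed
  then obtain q where q: "\<And>U. open U \<Longrightarrow> q \<in> U \<Longrightarrow> infinite {n. s n \<in> U}"
    using countably_compact_inj_seq_cluster[OF cc] by blast
  obtain W where W: "open W" "f q \<in> W" "\<not> (e \<in> W \<and> z \<in> W)"
  proof (cases "f q = e")
    case True
    then show ?thesis using that[of "- {z}"] \<open>e \<noteq> z\<close> by auto
  next
    case False
    then show ?thesis using that[of "- {e}"] by auto
  qed
  have "open (f -` W)"
    using cont W(1) by (simp add: continuous_on_open_vimage)
  then obtain A B where AB: "open A" "open B" "q \<in> A \<times> B" "A \<times> B \<subseteq> f -` W"
    using W(2) by (auto elim: open_prod_elim)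
  have "infinite {n. s n \<in> A \<times> B}"
    using q AB by (simp add: open_Times)
  then obtain m n where mn: "s m \<in> A \<times> B" "s n \<in> A \<times> B" "m \<noteq> n"
    by (rule infinite_obtain_two) simp
  have "(a m, b m) \<in> A \<times> B" "(a m, b n) \<in> A \<times> B"
    using mn by (auto simp: s_def)
  then have "e \<in> W" "z \<in> W"
    using AB(4) pattern[of m m] pattern[of m n] \<open>m \<noteq> n\<close> by auto
  with W(3) show False by blast
qed

lemma B_omega_diagonal_pattern:
  assumes "\<And>x y. h (B_mult x y) = h x * h y"
  shows "h (Some (0, m)) * h (Some (n, 0)) =
           (if m = n then h (Some (0, 0)) else h None)"
  using assms[of "Some (0, m)" "Some (n, 0)"] by (simp split: if_splits)

theorem theorem3:
  assumes "continuous_on UNIV (\<lambda>p::'a::{t2_space, semigroup_mult} \<times> 'a. fst p * snd p)"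
    and "countably_compact (UNIV :: ('a \<times> 'a) set)"
  shows "\<not> contains_B_omega (UNIV :: 'a set)"
proof
  assume "contains_B_omega (UNIV :: 'a set)"
  then obtain h :: "B_omega \<Rightarrow> 'a"
    where "inj h" and hom: "\<And>x y. h (B_mult x y) = h x * h y"
    unfolding contains_B_omega_def by blast
  have "h (Some (0, 0)) \<noteq> h None"
    using \<open>inj h\<close> by (auto dest: injD)
  then show False
    using no_diagonal_pattern[OF assms, of "h (Some (0, 0))" "h None"
        "\<lambda>m. h (Some (0, m))" "\<lambda>n. h (Some (n, 0))"]
      B_omega_diagonal_pattern[OF hom] by simp
qed

end
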